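(* Let $L\in\mathrm{Gr}(\mathbb R^n,m)$ and let $(B,N)$ be its Goldman–Tucker partition. Then: (a) If $|||\cdot|||=\|\cdot\|_\infty$: $\sigma(L_B)=\nu(L_B)=\max_{x\in L\cap\mathbb R^n_+,\|x\|=1}\min_{i\in B}x_i$ and $\sigma(L_N)=\nu(L_N)=\max_{x\in L^\perp\cap\mathbb R^n_+,\|x\|=1}\min_{i\in N}x_i$. In particular, if also $\|\cdot\|=\|\cdot\|_1$: $\sigma(L_B)=\nu(L_B)=\max_{x\in L\cap\Delta_{n-1}}\min_{i\in B}x_i$ and $\sigma(L_N)=\nu(L_N)=\max_{x\in L^\perp\cap\Delta_{n-1}}\min_{i\in N}x_i$. (b) If $|||\cdot|||=\|\cdot\|_1$: $\sigma(L_B)=\nu(L_B)=\min_{i\in B}\max_{x\in L\cap\mathbb R^n_+,\|x\|=1}x_i$ and $\sigma(L_N)=\nu(L_N)=\min_{i\in N}\max_{x\in L^\perp\cap\mathbb R^n_+,\|x\|=1}x_i$. In particular, if also $\|\cdot\|=\|\cdot\|_1$: $\sigma(L_B)=\nu(L_B)=\min_{i\in B}\max_{x\in L\cap\Delta_{n-1}}x_i$ and $\sigma(L_N)=\nu(L_N)=\min_{i\in N}\max_{x\in L^\perp\cap\Delta_{n-1}}x_i$. (c) If $\|\cdot\|=|||\cdot|||=\|\cdot\|_2$: $\sigma(L_B)=\nu(L_B)=\min_{u\in\mathbb R^B_+\times\{0_N\},\|u\|_2=1}\max_{x\in L\cap\mathbb R^n_+,\|x\|_2=1}\langle u,x\rangle$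 and $\sigma(L_N)=\nu(L_N)=\min_{u\in\{0_B\}\times\mathbb R^N_+,\|u\|_2=1}\max_{x\in L^\perp\cap\mathbb R^n_+,\|x\|_2=1}\langle u,x\rangle$.
   Context: $V=\mathbb R^n$ with the dot product, $K=\mathbb R^n_+$; $\mathrm{Gr}(\mathbb R^n,m)$ is the set of $m$-dimensional subspaces ($1\le m<n$), $L^\perp$ the orthogonal complement; $\Delta_{n-1}:=\{x\in\mathbb R^n_+:\sum_ix_i=1\}$. For every $L\in\mathrm{Gr}(\mathbb R^n,m)$ there is a unique partition $B\cup N=\{1,\dots,n\}$ (the Goldman–Tucker partition) with $L\cap(\operatorname{int}\mathbb R^B_+\times\{0_N\})\neq\emptyset$ and $L^\perp\cap(\{0_B\}\times\operatorname{int}\mathbb R^N_+)\neq\emptyset$. Set $V_B:=\mathbb R^B\times\{0_N\}$, $K_B:=\mathbb R^B_+\times\{0_N\}$, $V_N:=\{0_B\}\times\mathbb R^N$, $K_N:=\{0_B\}\times\mathbb R^N_+$, $L_B:=L\cap V_B$, $L_N:=L^\perp\cap V_N$. For a coordinate subspace $V'\in\{V_B,V_N\}$ with cone $K'\in\{K_B,K_N\}$ and a subspace $L'\subseteq V'$ (with $L'\cap\operatorname{int}_{V'}K'\neq\emptyset$), the quantities are computed inside $V'$ (orthogonal complement, dual cone $K'^*=K'$, and norms restricted to $V'$, dual norms taken within $V'$): $\nu(L'):=\min\{\|u-y\|^*:u\in K',\ y\in L'^{\perp}\cap V',\ |||u|||^*=1\}$, and $\sigma(L'):=\min_{v\in K',|||v|||=1}\max_{x\in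 L',\|x\|\le1}\lambda_v(x)$ where $\lambda_v(x):=\sup\{t: x-tv\in K'\}$. Here $\|\cdot\|,|||\cdot|||$ are the specified norms on $\mathbb R^n$ and $\|u\|^*:=\max_{\|x\|=1}\langle u,x\rangle$, $|||u|||^*:=\max_{|||x|||=1}\langle u,x\rangle$. *)

theory Defs
  imports "HOL-Analysis.Analysis" "HOL-Library.Extended_Real"
begin

text \<open>Ambient space V = real^'n with the dot product; K = nonnegative orthant.\<close>

definition nonneg :: "real^'n \<Rightarrow> bool" where
  "nonneg x \<longleftrightarrow> (\<forall>i. 0 \<le> x $ i)"

definition is_norm :: "(real^'n \<Rightarrow> real) \<Rightarrow> bool" where
  "is_norm f \<longleftrightarrow> (\<forall>x. 0 \<le> f x) \<and> (\<forall>x. f x = 0 \<longleftrightarrow> x = 0) \<and>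
     (\<forall>c x. f (c *\<^sub>R x) = \<bar>c\<bar> * f x) \<and> (\<forall>x y. f (x + y) \<le> f x + f y)"

definition norm_inf :: "real^'n \<Rightarrow> real" where
  "norm_inf x = Max (range (\<lambda>i. \<bar>x $ i\<bar>))"

definition norm_one :: "real^'n \<Rightarrow> real" where
  "norm_one x = (\<Sum>i\<in>UNIV. \<bar>x $ i\<bar>)"

definition std_simplex :: "(real^'n) set" where
  "std_simplex = {x. nonneg x \<and> (\<Sum>i\<in>UNIV. x $ i) = 1}"

definition Gr :: "nat \<Rightarrow> (real^'n) set set" where
  "Gr m = {L. subspace L \<and> dim L = m}"

definition VS :: "'n set \<Rightarrow> (real^'n) set" where
  "VS S = {x. \<forall>i. i \<notin> S \<longrightarrow> x $ i = 0}"

definition KS :: "'n set \<Rightarrow> (real^'n) set" where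
  "KS S = {x \<in> VS S. nonneg x}"

text \<open>Goldman--Tucker partition (B, N = -B) of L.\<close>
definition GT_partition :: "(real^'n) set \<Rightarrow> 'n set \<Rightarrow> bool" where
  "GT_partition L B \<longleftrightarrow>
     (\<exists>x\<in>L. (\<forall>i\<in>B. 0 < x $ i) \<and> (\<forall>i. i \<notin> B \<longrightarrow> x $ i = 0)) \<and>
     (\<exists>y\<in>orthogonal_comp L. (\<forall>i\<in>B. y $ i = 0) \<and> (\<forall>i. i \<notin> B \<longrightarrow> 0 < y $ i))"

definition dualV :: "'n set \<Rightarrow> (real^'n \<Rightarrow> real) \<Rightarrow> real^'n \<Rightarrow> real" where
  "dualV S f u = Sup {u \<bullet> x | x. x \<in> VS S \<and> f x = 1}"

definition orthV :: "'n set \<Rightarrow> (real^'n) set \<Rightarrow> (real^'n) set" where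
  "orthV S L' = orthogonal_comp L' \<inter> VS S"

text \<open>nu(L') inside V_S, with norm nrm = ||.|| and tnrm = |||.|||.\<close>
definition nuV :: "'n set \<Rightarrow> (real^'n \<Rightarrow> real) \<Rightarrow> (real^'n \<Rightarrow> real) \<Rightarrow> (real^'n) set \<Rightarrow> real" where
  "nuV S nrm tnrm L' = Inf {dualV S nrm (u - y) | u y.
      u \<in> KS S \<and> y \<in> orthV S L' \<and> dualV S tnrm u = 1}"

text \<open>lambda_v(x) = sup{t. x - t v in K_S}, as an extended real (sup of empty set = -infinity).\<close>
definition lamV :: "'n set \<Rightarrow> real^'n \<Rightarrow> real^'n \<Rightarrow> ereal" where
  "lamV S v x = Sup {ereal t | t. x - t *\<^sub>R v \<in> KS S}"

definition sigmaV :: "'n set \<Rightarrow> (real^'n \<Rightarrow> real) \<Rightarrow> (real^'n \<Rightarrow> real) \<Rightarrow> (real^'n) set \<Rightarrow> ereal" where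
  "sigmaV S nrm tnrm L' = Inf {Sup {lamV S v x | x. x \<in> L' \<and> nrm x \<le> 1} | v.
      v \<in> KS S \<and> tnrm v = 1}"

end

theory Submission
  imports Defs
begin

text \<open>Both condition measures are governed by the support function
  \<open>h(u) = sup {\<langle>u, x\<rangle> | x \<in> L' \<inter> K', \<parallel>x\<parallel> = 1}\<close>. As \<open>\<langle>y, x\<rangle> = 0\<close> for \<open>y \<in> L'\<^sup>\<bottom>\<close>, every
  \<open>\<parallel>u - y\<parallel>\<^sup>*\<close> occurring in \<open>\<nu>\<close> is at least \<open>h(u)\<close>; and \<open>\<lambda>\<^sub>v(x) \<ge> t\<close> just says \<open>x \<ge> t v\<close>. The reverse
  inequalities are minimax statements obtained by separating hyperplanes: the separating functional
  is nonnegative on \<open>K'\<close> and vanishes on \<open>L'\<^sup>\<bottom>\<close>, so it is itself a vector of \<open>L' \<inter> K'\<close>, and this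
  contradicts the assumed bound.
  On the Goldman--Tucker blocks every nonnegative vector of \<open>L\<close> (of \<open>L\<^sup>\<bottom>\<close>) is orthogonal to a
  vector that is positive off \<open>B\<close> (on \<open>B\<close>), so \<open>L \<inter> \<real>\<^sup>n\<^sub>+ = L\<^sub>B \<inter> K\<^sub>B\<close> and
  \<open>L\<^sup>\<bottom> \<inter> \<real>\<^sup>n\<^sub>+ = L\<^sub>N \<inter> K\<^sub>N\<close>.\<close>

lemma is_norm_nonneg: "is_norm f \<Longrightarrow> 0 \<le> f x"
  and is_norm_eq_0_iff: "is_norm f \<Longrightarrow> f x = 0 \<longleftrightarrow> x = 0"
  and is_norm_scaleR: "is_norm f \<Longrightarrow> f (c *\<^sub>R x) = \<bar>c\<bar> * f x"
  and is_norm_triangle: "is_norm f \<Longrightarrow> f (x + y) \<le> f x + f y"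
  by (simp_all add: is_norm_def)

lemma is_norm_zero: "is_norm f \<Longrightarrow> f 0 = 0"
  by (simp add: is_norm_eq_0_iff)

lemma is_norm_pos: "is_norm f \<Longrightarrow> x \<noteq> 0 \<Longrightarrow> 0 < f x"
  by (metis is_norm_eq_0_iff is_norm_nonneg order_le_less)

lemma is_norm_minus: "is_norm f \<Longrightarrow> f (- x) = f x"
  using is_norm_scaleR[of f "-1" x] by simp

lemma is_norm_unit: "is_norm f \<Longrightarrow> x \<noteq> 0 \<Longrightarrow> f ((1 / f x) *\<^sub>R x) = 1"
  using is_norm_scaleR[of f "1 / f x" x] is_norm_pos[of f x] by simp

lemma is_norm_sum:
  assumes "is_norm f"
  shows "f (sum g A) \<le> (\<Sum>i\<in>A. f (g i))"
proof (induction A rule: infinite_finite_induct)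
  case (insert a A)
  then show ?case
    using is_norm_triangle[OF assms, of "g a" "sum g A"] by simp
qed (simp_all add: is_norm_zero[OF assms])

lemma is_norm_dist: "is_norm f \<Longrightarrow> \<bar>f x - f y\<bar> \<le> f (x - y)"
  using is_norm_triangle[of f y "x - y"] is_norm_triangle[of f x "y - x"]
    is_norm_minus[of f "x - y"] by (simp add: abs_le_iff)

lemma is_norm_le_norm:
  fixes f :: "real^'n \<Rightarrow> real"
  assumes "is_norm f"
  shows "\<exists>K>0. \<forall>x. f x \<le> K * norm x"
proof -
  define K where "K = 1 + (\<Sum>i\<in>UNIV. f (axis i 1))"
  have "f x \<le> K * norm x" for x
  proof -
    have "f x = f (\<Sum>i\<in>UNIV. x $ i *\<^sub>R axis i 1)"
      using basis_expansion[of x] by (simp add: scalar_mult_eq_scaleR)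
    also have "\<dots> \<le> (\<Sum>i\<in>UNIV. f (x $ i *\<^sub>R axis i 1))"
      by (rule is_norm_sum[OF assms])
    also have "\<dots> = (\<Sum>i\<in>UNIV. \<bar>x $ i\<bar> * f (axis i 1))"
      by (simp add: is_norm_scaleR[OF assms])
    also have "\<dots> \<le> (\<Sum>i\<in>UNIV. norm x * f (axis i 1))"
      by (intro sum_mono mult_right_mono component_le_norm_cart is_norm_nonneg[OF assms])
    also have "\<dots> \<le> K * norm x"
      by (simp add: K_def sum_distrib_left mult.commute distrib_left)
    finally show ?thesis .
  qed
  moreover have "K > 0"
    unfolding K_def using is_norm_nonneg[OF assms] by (simp add: add_pos_nonneg sum_nonneg)
  ultimately show ?thesis by blast
qed

lemma is_norm_continuous:
  fixes f :: "real^'n \<Rightarrow> real"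
  assumes "is_norm f"
  shows "continuous_on A f"
proof -
  obtain K where K: "K > 0" "\<And>x. f x \<le> K * norm x"
    using is_norm_le_norm[OF assms] by blast
  have "K-lipschitz_on A f"
    by (rule lipschitz_onI)
      (use K is_norm_dist[OF assms] in \<open>auto simp: dist_real_def dist_norm intro: order_trans\<close>)
  then show ?thesis by (rule lipschitz_on_continuous_on)
qed

lemma is_norm_ge_norm:
  fixes f :: "real^'n \<Rightarrow> real"
  assumes "is_norm f"
  shows "\<exists>c>0. \<forall>x. c * norm x \<le> f x"
proof -
  have "sphere (0::real^'n) 1 \<noteq> {}" by simp
  then obtain x0 where x0: "x0 \<in> sphere (0::real^'n) 1" "\<And>y. y \<in> sphere 0 1 \<Longrightarrow> f x0 \<le> f y"
    using continuous_attains_inf[OF compact_sphere _ is_norm_continuous[OF assms]] by blast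
  have "f x0 * norm x \<le> f x" for x
  proof (cases "x = 0")
    case False
    then have "f x0 \<le> f ((1 / norm x) *\<^sub>R x)" by (intro x0(2)) simp
    then show ?thesis using False by (simp add: is_norm_scaleR[OF assms] field_simps)
  qed (simp add: is_norm_zero[OF assms])
  moreover have "f x0 > 0" using x0(1) is_norm_pos[OF assms, of x0] by force
  ultimately show ?thesis by blast
qed

lemma is_norm_convex_combination:
  "is_norm f \<Longrightarrow> 0 \<le> u \<Longrightarrow> 0 \<le> v \<Longrightarrow> f (u *\<^sub>R x + v *\<^sub>R y) \<le> u * f x + v * f y"
  using is_norm_triangle[of f "u *\<^sub>R x" "v *\<^sub>R y"] is_norm_scaleR[of f] by simp

lemma is_norm_convex_ball:
  fixes f :: "real^'n \<Rightarrow> real"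
  assumes "is_norm f"
  shows "convex {x. f x < r}"
proof (rule convexI, clarsimp)
  fix x y :: "real^'n" and u v :: real
  assume xy: "f x < r" "f y < r" and uv: "0 \<le> u" "0 \<le> v" "u + v = 1"
  have "u * f x + v * f y < r"
  proof (cases "u = 0")
    case False
    then have "u * f x < u * r" "v * f y \<le> v * r"
      using xy uv by (auto intro: mult_left_mono)
    moreover have "u * r + v * r = r" using uv(3) by (metis distrib_right mult_1)
    ultimately show ?thesis by linarith
  qed (use xy uv in simp)
  then show "f (u *\<^sub>R x + v *\<^sub>R y) < r"
    using is_norm_convex_combination[OF assms uv(1,2)] by (meson le_less_trans)
qed

lemma is_norm_convex_cball:
  fixes f :: "real^'n \<Rightarrow> real"
  assumes "is_norm f"
  shows "convex {x. f x \<le> r}"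
proof (rule convexI, clarsimp)
  fix x y :: "real^'n" and u v :: real
  assume xy: "f x \<le> r" "f y \<le> r" and uv: "0 \<le> u" "0 \<le> v" "u + v = 1"
  have "u * f x + v * f y \<le> u * r + v * r"
    using xy uv by (intro add_mono mult_left_mono)
  also have "\<dots> = r" using uv(3) by (metis distrib_right mult_1)
  finally show "f (u *\<^sub>R x + v *\<^sub>R y) \<le> r"
    using is_norm_convex_combination[OF assms uv(1,2)] by (meson order_trans)
qed

lemma is_norm_compact_ball:
  fixes f :: "real^'n \<Rightarrow> real"
  assumes "is_norm f" "closed F"
  shows "compact {x \<in> F. f x \<le> r}"
proof -
  obtain c where c: "c > 0" "\<And>x. c * norm x \<le> f x" using is_norm_ge_norm[OF assms(1)] by blast
  have "closed {x. f x \<le> r}"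
    by (rule closed_Collect_le[OF is_norm_continuous[OF assms(1)] continuous_on_const])
  then have "closed {x \<in> F. f x \<le> r}"
    using assms(2) closed_Int by (simp add: Collect_conj_eq)
  moreover have "{x \<in> F. f x \<le> r} \<subseteq> cball 0 (r / c)"
  proof clarify
    fix x assume "f x \<le> r"
    then have "c * norm x \<le> r" using c(2)[of x] by linarith
    then show "x \<in> cball 0 (r / c)" using c(1) by (simp add: field_simps)
  qed
  ultimately show ?thesis
    unfolding compact_eq_bounded_closed using bounded_subset[OF bounded_cball] by blast
qed

lemma is_norm_norm: "is_norm (norm :: real^'n \<Rightarrow> real)"
  by (simp add: is_norm_def norm_triangle_ineq)

lemma norm_inf_eq_infnorm: "norm_inf x = infnorm x"
  by (simp add: norm_inf_def infnorm_cart cSup_eq_Max full_SetCompr_eq)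

lemma is_norm_inf: "is_norm (norm_inf :: real^'n \<Rightarrow> real)"
  by (simp add: is_norm_def norm_inf_eq_infnorm infnorm_pos_le infnorm_eq_0 infnorm_mul
      infnorm_triangle)

lemma norm_inf_le_1_iff: "norm_inf x \<le> 1 \<longleftrightarrow> (\<forall>i. \<bar>x $ i\<bar> \<le> 1)"
  by (simp add: norm_inf_def)

lemma is_norm_one: "is_norm (norm_one :: real^'n \<Rightarrow> real)"
  unfolding is_norm_def norm_one_def
  by (auto simp: sum_nonneg sum_nonneg_eq_0_iff vec_eq_iff abs_mult sum_distrib_left
      sum.distrib[symmetric] intro!: sum_mono abs_triangle_ineq)

lemma norm_one_axis: "norm_one (axis j (1::real)) = 1"
  by (simp add: norm_one_def axis_def if_distrib sum.delta cong: if_cong)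

lemma std_simplex_iff: "x \<in> std_simplex \<longleftrightarrow> nonneg x \<and> norm_one x = 1"
  by (auto simp: std_simplex_def norm_one_def nonneg_def)

lemma mem_VS_iff: "x \<in> VS S \<longleftrightarrow> (\<forall>i. i \<notin> S \<longrightarrow> x $ i = 0)"
  by (simp add: VS_def)

lemma mem_KS_iff: "x \<in> KS S \<longleftrightarrow> (\<forall>i. i \<notin> S \<longrightarrow> x $ i = 0) \<and> (\<forall>i. 0 \<le> x $ i)"
  by (simp add: KS_def VS_def nonneg_def)

lemma subspace_VS: "subspace (VS S)"
  by (simp add: subspace_def mem_VS_iff)

lemma VS_scaleR: "x \<in> VS S \<Longrightarrow> c *\<^sub>R x \<in> VS S"
  by (simp add: mem_VS_iff)

lemma KS_imp_VS: "x \<in> KS S \<Longrightarrow> x \<in> VS S"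
  by (simp add: KS_def)

lemma KS_imp_nonneg: "x \<in> KS S \<Longrightarrow> nonneg x"
  by (simp add: KS_def)

lemma zero_in_KS: "0 \<in> KS S"
  by (simp add: mem_KS_iff)

lemma KS_add: "x \<in> KS S \<Longrightarrow> y \<in> KS S \<Longrightarrow> x + y \<in> KS S"
  by (simp add: mem_KS_iff)

lemma KS_scaleR: "x \<in> KS S \<Longrightarrow> 0 \<le> c \<Longrightarrow> c *\<^sub>R x \<in> KS S"
  by (simp add: mem_KS_iff)

lemma axis_in_KS: "i \<in> S \<Longrightarrow> axis i 1 \<in> KS S"
  by (simp add: mem_KS_iff axis_def)

lemma convex_KS: "convex (KS S)"
  by (auto simp: convex_def mem_KS_iff)

lemma closed_KS: "closed (KS S)"
proof -
  have "KS S = (\<Inter>i\<in>-S. {x. axis i 1 \<bullet> x = 0}) \<inter> (\<Inter>i. {x. axis i 1 \<bullet> x \<ge> 0})"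
    by (auto simp: mem_KS_iff inner_axis')
  then show ?thesis
    by (metis closed_Int closed_INT closed_hyperplane closed_halfspace_ge)
qed

lemma inner_VS: "x \<in> VS S \<Longrightarrow> x \<bullet> y = (\<Sum>i\<in>S. x $ i * y $ i)"
  unfolding inner_vec_def inner_real_def mem_VS_iff by (rule sum.mono_neutral_right) auto

lemma inner_nonneg_nonneg: "nonneg x \<Longrightarrow> nonneg y \<Longrightarrow> 0 \<le> x \<bullet> y"
  unfolding inner_vec_def inner_real_def nonneg_def by (auto intro!: sum_nonneg)

lemma norm_le_norm_add_KS: "u \<in> KS S \<Longrightarrow> z \<in> KS S \<Longrightarrow> norm u \<le> norm (u + z)"
proof -
  assume "u \<in> KS S" "z \<in> KS S"
  then have "0 \<le> u \<bullet> z" by (intro inner_nonneg_nonneg KS_imp_nonneg)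
  then have "(norm u)\<^sup>2 \<le> (norm (u + z))\<^sup>2"
    by (simp add: power2_norm_eq_inner inner_add_left inner_add_right inner_commute)
  then show ?thesis by (simp add: power2_le_iff_abs_le)
qed

lemma nonneg_orthogonal_imp_VS:
  assumes "nonneg x" "nonneg y" "x \<bullet> y = 0" "\<forall>i. i \<notin> S \<longrightarrow> 0 < y $ i"
  shows "x \<in> VS S"
proof -
  have "\<forall>i\<in>UNIV. x $ i * y $ i = 0"
    using assms(1-3) by (subst sum_nonneg_eq_0_iff[symmetric]) (auto simp: inner_vec_def nonneg_def)
  then show ?thesis using assms(4) by (force simp: mem_VS_iff)
qed

lemma ray_bounded_below_imp_nonneg:
  fixes a b c :: real
  assumes "\<And>t. 0 \<le> t \<Longrightarrow> b < a + t * c"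
  shows "0 \<le> c"
proof (rule ccontr)
  assume "\<not> 0 \<le> c"
  then have "((\<bar>a\<bar> + \<bar>b\<bar>) / - c) * c = - (\<bar>a\<bar> + \<bar>b\<bar>)"
    by simp
  then have "a + ((\<bar>a\<bar> + \<bar>b\<bar>) / - c) * c \<le> b"
    by linarith
  moreover have "0 \<le> (\<bar>a\<bar> + \<bar>b\<bar>) / - c"
    using \<open>\<not> 0 \<le> c\<close> by (simp add: divide_nonneg_neg)
  ultimately show False
    using assms by fastforce
qed

lemma line_bounded_below_imp_zero:
  fixes a b c :: real
  assumes "\<And>t. b < a + t * c"
  shows "c = 0"
  using ray_bounded_below_imp_nonneg[of b a c] ray_bounded_below_imp_nonneg[of b a "- c"]
    assms[of "- _"] assms by fastforce

definition proj :: "'n set \<Rightarrow> real^'n \<Rightarrow> real^'n" where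
  "proj S a = (\<chi> i. if i \<in> S then a $ i else 0)"

lemma proj_in_VS: "proj S a \<in> VS S"
  by (simp add: proj_def mem_VS_iff)

lemma proj_1_index: "(proj S 1 :: real^'n) $ i = (if i \<in> S then 1 else 0)"
  by (simp add: proj_def)

lemma inner_proj: "x \<in> VS S \<Longrightarrow> proj S a \<bullet> x = a \<bullet> x"
  unfolding inner_vec_def inner_real_def proj_def mem_VS_iff by (intro sum.cong) auto

lemma proj_in_KS_if_bounded_below:
  assumes "\<And>z. z \<in> KS S \<Longrightarrow> b < c + a \<bullet> z"
  shows "proj S a \<in> KS S"
  unfolding mem_KS_iff
proof (intro conjI allI impI)
  fix i
  show "0 \<le> proj S a $ i"
  proof (cases "i \<in> S")
    case True
    show ?thesis
    proof (rule ray_bounded_below_imp_nonneg)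
      fix t :: real assume "0 \<le> t"
      then show "b < c + t * proj S a $ i"
        using assms[of "t *\<^sub>R axis i 1"] KS_scaleR[OF axis_in_KS[OF True]] True
        by (simp add: proj_def inner_axis)
    qed
  qed (simp add: proj_def)
qed (simp add: proj_def)

section \<open>Dual norms within a coordinate subspace\<close>

locale coord_normed =
  fixes S :: "'a::finite set" and nrm :: "real^'a \<Rightarrow> real"
  assumes S_ne: "S \<noteq> {}" and is_norm: "is_norm nrm"
begin

abbreviation dual :: "real^'a \<Rightarrow> real" where
  "dual \<equiv> dualV S nrm"

lemma nrm_unit: "x \<noteq> 0 \<Longrightarrow> nrm ((1 / nrm x) *\<^sub>R x) = 1"
  by (rule is_norm_unit[OF is_norm])

lemma exists_unit_in_VS: "\<exists>x\<in>VS S. nrm x = 1"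
proof -
  obtain i where "i \<in> S" using S_ne by blast
  then have "axis i 1 \<in> VS S" "axis i (1::real) \<noteq> 0"
    by (auto simp: mem_VS_iff axis_def vec_eq_iff)
  then show ?thesis
    using nrm_unit VS_scaleR by blast
qed

lemma dual_values_bdd: "bdd_above {d \<bullet> x | x. x \<in> VS S \<and> nrm x = 1}"
proof -
  obtain c where c: "c > 0" "\<And>x. c * norm x \<le> nrm x"
    using is_norm_ge_norm[OF is_norm] by blast
  have "d \<bullet> x \<le> norm d / c" if "nrm x = 1" for x
  proof -
    have "d \<bullet> x \<le> norm d * norm x" by (rule norm_cauchy_schwarz)
    also have "\<dots> \<le> norm d * (1 / c)"
      using c(1) c(2)[of x] that by (intro mult_left_mono) (auto simp: field_simps)
    finally show ?thesis by simp
  qed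
  then show ?thesis by (auto simp: bdd_above_def)
qed

lemma dual_inner_le: "x \<in> VS S \<Longrightarrow> d \<bullet> x \<le> dual d * nrm x"
proof (cases "x = 0")
  case False
  assume x: "x \<in> VS S"
  have "d \<bullet> ((1 / nrm x) *\<^sub>R x) \<le> dual d"
    unfolding dualV_def using x False nrm_unit VS_scaleR
    by (intro cSup_upper[OF _ dual_values_bdd]) blast
  then show ?thesis
    using is_norm_pos[OF is_norm False] by (simp add: divide_le_eq)
qed (simp add: is_norm_zero[OF is_norm])

lemma dual_inner_le_unit: "x \<in> VS S \<Longrightarrow> nrm x = 1 \<Longrightarrow> d \<bullet> x \<le> dual d"
  using dual_inner_le[of x d] by simp

lemma dual_le: "(\<And>x. x \<in> VS S \<Longrightarrow> nrm x = 1 \<Longrightarrow> d \<bullet> x \<le> r) \<Longrightarrow> dual d \<le> r"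
  unfolding dualV_def using exists_unit_in_VS by (intro cSup_least) auto

lemma dual_nonneg: "0 \<le> dual d"
proof -
  obtain x where x: "x \<in> VS S" "nrm x = 1" using exists_unit_in_VS by blast
  have "d \<bullet> x \<le> dual d" "d \<bullet> (- x) \<le> dual d"
    using dual_inner_le[of x d] dual_inner_le[of "- x" d] x subspace_neg[OF subspace_VS]
      is_norm_minus[OF is_norm] by auto
  then show ?thesis by simp
qed

lemma dual_triangle: "dual (d + e) \<le> dual d + dual e"
  by (rule dual_le) (simp add: inner_add_left add_mono dual_inner_le_unit)

lemma dual_scaleR_le: "0 \<le> c \<Longrightarrow> dual (c *\<^sub>R d) \<le> c * dual d"
  by (rule dual_le) (simp add: mult_left_mono dual_inner_le_unit)

lemma dual_scaleR: "0 \<le> c \<Longrightarrow> dual (c *\<^sub>R d) = c * dual d"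
proof (cases "c = 0")
  case False
  assume "0 \<le> c"
  then have "c > 0" using False by simp
  then have "dual d \<le> (1 / c) * dual (c *\<^sub>R d)"
    using dual_scaleR_le[of "1 / c" "c *\<^sub>R d"] by simp
  then show ?thesis
    using dual_scaleR_le[OF \<open>0 \<le> c\<close>, of d] \<open>c > 0\<close> by (simp add: field_simps)
next
  case True
  have "dual 0 \<le> 0" by (rule dual_le) simp
  with True show ?thesis using dual_nonneg[of 0] by simp
qed

lemma dual_le_norm: "\<exists>K>0. \<forall>d. dual d \<le> K * norm d"
proof -
  obtain c where c: "c > 0" "\<And>x. c * norm x \<le> nrm x"
    using is_norm_ge_norm[OF is_norm] by blast
  have "dual d \<le> (1 / c) * norm d" for d
  proof (rule dual_le)
    fix x assume "nrm x = 1"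
    then have "norm x \<le> 1 / c" using c(1) c(2)[of x] by (simp add: field_simps)
    have "d \<bullet> x \<le> norm d * norm x" by (rule norm_cauchy_schwarz)
    also have "\<dots> \<le> norm d * (1 / c)" by (rule mult_left_mono[OF \<open>norm x \<le> 1 / c\<close> norm_ge_zero])
    finally show "d \<bullet> x \<le> (1 / c) * norm d" by (simp add: mult.commute)
  qed
  then show ?thesis using c(1) by (intro exI[of _ "1 / c"]) simp
qed

lemma exists_dual_unit_in_KS: "\<exists>u\<in>KS S. dual u = 1"
proof -
  obtain i where i: "i \<in> S" using S_ne by blast
  let ?e = "axis i (1::real) :: real^'a"
  have "?e \<bullet> ?e \<le> dual ?e * nrm ?e"
    using i by (intro dual_inner_le) (simp add: mem_VS_iff axis_def)
  then have "dual ?e \<noteq> 0" by (auto simp: inner_axis_axis)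
  then have "dual ?e > 0" using dual_nonneg[of ?e] by simp
  then have "dual ((1 / dual ?e) *\<^sub>R ?e) = 1"
    by (simp add: dual_scaleR)
  moreover have "(1 / dual ?e) *\<^sub>R ?e \<in> KS S"
    using axis_in_KS[OF i] dual_nonneg by (simp add: KS_scaleR)
  ultimately show ?thesis ..
qed

lemma dual_lipschitz: "\<exists>K>0. \<forall>d e. dual e \<le> dual d + K * norm (e - d)"
proof -
  obtain K where K: "K > 0" "\<And>d. dual d \<le> K * norm d" using dual_le_norm by blast
  have "dual e \<le> dual d + K * norm (e - d)" for d e
    using dual_triangle[of d "e - d"] K(2)[of "e - d"] by simp
  then show ?thesis using K(1) by blast
qed

lemma continuous_dual: "continuous_on A dual"
proof -
  obtain K where K: "K > 0" "\<And>d e. dual e \<le> dual d + K * norm (e - d)"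
    using dual_lipschitz by blast
  have "K-lipschitz_on A dual"
  proof (rule lipschitz_onI)
    fix d e
    show "dist (dual d) (dual e) \<le> K * dist d e"
      using K(2)[of d e] K(2)[of e d] norm_minus_commute[of d e]
      by (simp add: dist_real_def dist_norm abs_le_iff)
  qed (use K in simp)
  then show ?thesis by (rule lipschitz_on_continuous_on)
qed

lemma norm_le_dual: "\<exists>K>0. \<forall>d\<in>VS S. norm d \<le> K * dual d"
proof -
  obtain K where K: "K > 0" "\<And>x. nrm x \<le> K * norm x"
    using is_norm_le_norm[OF is_norm] by blast
  have "norm d \<le> K * dual d" if "d \<in> VS S" for d
  proof (cases "d = 0")
    case False
    have "norm d * norm d = d \<bullet> d" by (simp add: dot_square_norm power2_eq_square)
    also have "\<dots> \<le> dual d * nrm d" using dual_inner_le[OF that] .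
    also have "\<dots> \<le> dual d * (K * norm d)" using K(2) dual_nonneg by (simp add: mult_left_mono)
    finally show ?thesis using False by (simp add: mult.commute mult.left_commute)
  qed (use K dual_nonneg in simp)
  then show ?thesis using K(1) by blast
qed

lemma compact_dual_ball: "compact {d \<in> VS S. dual d \<le> r}"
proof -
  obtain K where K: "K > 0" "\<And>d. d \<in> VS S \<Longrightarrow> norm d \<le> K * dual d"
    using norm_le_dual by blast
  have "closed {d. dual d \<le> r}"
    by (rule closed_Collect_le[OF continuous_dual continuous_on_const])
  then have "closed {d \<in> VS S. dual d \<le> r}"
    using closed_subspace[OF subspace_VS, of S] closed_Int by (simp add: Collect_conj_eq)
  moreover have "{d \<in> VS S. dual d \<le> r} \<subseteq> cball 0 (K * r)"
  proof clarify
    fix d assume "d \<in> VS S" "dual d \<le> r"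
    then have "norm d \<le> K * r"
      using K(2)[of d] mult_left_mono[of "dual d" r K] K(1) by linarith
    then show "d \<in> cball 0 (K * r)" by simp
  qed
  ultimately show ?thesis
    unfolding compact_eq_bounded_closed using bounded_subset[OF bounded_cball] by blast
qed

lemma convex_dual_ball: "convex {d \<in> VS S. dual d \<le> r}"
proof (rule convexI, clarify)
  fix d e :: "real^'a" and u v :: real
  assume de: "d \<in> VS S" "dual d \<le> r" "e \<in> VS S" "dual e \<le> r" and uv: "0 \<le> u" "0 \<le> v" "u + v = 1"
  have "dual (u *\<^sub>R d + v *\<^sub>R e) \<le> dual (u *\<^sub>R d) + dual (v *\<^sub>R e)"
    by (rule dual_triangle)
  also have "\<dots> = u * dual d + v * dual e" using uv by (simp add: dual_scaleR)
  also have "\<dots> \<le> u * r + v * r" using de uv by (intro add_mono mult_left_mono)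
  also have "\<dots> = r" using uv(3) by (metis distrib_right mult_1)
  finally show "u *\<^sub>R d + v *\<^sub>R e \<in> VS S \<and> dual (u *\<^sub>R d + v *\<^sub>R e) \<le> r"
    using de by (simp add: mem_VS_iff)
qed

lemma exists_norming_functional:
  assumes z: "z \<in> VS S" "z \<noteq> 0"
  shows "\<exists>q\<in>VS S. dual q \<le> 1 \<and> q \<bullet> z = nrm z"
proof -
  define T where "T = {x. nrm x < 1}"
  define z0 where "z0 = (1 / nrm z) *\<^sub>R z"
  have "z0 \<notin> T" "0 \<in> T"
    using nrm_unit[OF z(2)] is_norm_zero[OF is_norm] by (auto simp: T_def z0_def)
  then obtain a b where a: "a \<noteq> 0" "a \<bullet> z0 \<le> b" "\<And>x. x \<in> T \<Longrightarrow> b \<le> a \<bullet> x"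
    using separating_hyperplane_sets[of "{z0}" T] is_norm_convex_ball[OF is_norm]
    unfolding T_def by force
  define g where "g = - a"
  have g_T: "g \<bullet> x \<le> g \<bullet> z0" if "x \<in> T" for x
    using a that by (force simp: g_def)
  have "g \<noteq> 0" using a(1) by (simp add: g_def)
  then have "(1 / (2 * nrm g)) *\<^sub>R g \<in> T"
    using is_norm_pos[OF is_norm, of g] by (simp add: T_def is_norm_scaleR[OF is_norm])
  moreover have "0 < g \<bullet> ((1 / (2 * nrm g)) *\<^sub>R g)"
    using \<open>g \<noteq> 0\<close> is_norm_pos[OF is_norm, of g] by simp
  ultimately have g_z0: "g \<bullet> z0 > 0" using g_T by fastforce
  have g_unit: "g \<bullet> x \<le> g \<bullet> z0" if "nrm x = 1" for x
  proof (rule field_le_mult_one_interval)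
    fix s :: real assume "0 < s" "s < 1"
    then have "s *\<^sub>R x \<in> T" using that by (simp add: T_def is_norm_scaleR[OF is_norm])
    then show "s * (g \<bullet> x) \<le> g \<bullet> z0" using g_T[of "s *\<^sub>R x"] by simp
  qed
  define q where "q = proj S ((1 / (g \<bullet> z0)) *\<^sub>R g)"
  have "dual q \<le> 1"
  proof (rule dual_le)
    fix x assume "x \<in> VS S" "nrm x = 1"
    then show "q \<bullet> x \<le> 1"
      using g_unit g_z0 by (simp add: q_def inner_proj)
  qed
  moreover have "q \<bullet> z = nrm z"
    using g_z0 is_norm_pos[OF is_norm z(2)] inner_proj[OF z(1)]
    by (simp add: q_def z0_def field_simps)
  ultimately show ?thesis using proj_in_VS unfolding q_def by blast
qed

lemma nrm_proj_lt_of_dual_ball: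
  assumes "0 \<le> r" and bound: "\<And>d. d \<in> VS S \<Longrightarrow> dual d \<le> r \<Longrightarrow> a \<bullet> d < b"
  shows "r * nrm (proj S a) < b"
proof (cases "proj S a = 0")
  case True
  have "dual 0 \<le> r" using assms(1) dual_scaleR[of 0 0] by simp
  then show ?thesis using True bound[of 0] is_norm_zero[OF is_norm] by (simp add: subspace_0[OF subspace_VS])
next
  case False
  then obtain q where q: "q \<in> VS S" "dual q \<le> 1" "q \<bullet> proj S a = nrm (proj S a)"
    using exists_norming_functional[OF proj_in_VS] by blast
  have "a \<bullet> (r *\<^sub>R q) < b"
    using q assms(1) by (intro bound) (simp_all add: VS_scaleR dual_scaleR mult_left_le)
  then show ?thesis using q(3) inner_proj[OF q(1), of a] by (simp add: inner_commute)
qed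

lemma closure_dual_ball_approx:
  assumes "d \<in> closure D" "dual d \<le> r" "0 < \<delta>"
  shows "\<exists>e\<in>D. dual e < r + \<delta>"
proof -
  obtain K where K: "K > 0" "\<And>d e. dual e \<le> dual d + K * norm (e - d)"
    using dual_lipschitz by blast
  obtain e where e: "e \<in> D" "dist e d < \<delta> / K"
    using assms(1,3) K(1) unfolding closure_approachable by (metis divide_pos_pos)
  have "dual e \<le> dual d + K * norm (e - d)" by (rule K(2))
  also have "K * norm (e - d) < \<delta>"
    using e(2) K(1) by (simp add: dist_norm field_simps)
  finally show ?thesis using assms(2) e(1) by force
qed

end

lemma norm_inf_proj_1: "S \<noteq> {} \<Longrightarrow> norm_inf (proj S 1 :: real^'n) = 1"
  unfolding norm_inf_def proj_def by (rule Max_eqI) auto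

lemma dualV_norm_inf:
  assumes "S \<noteq> {}" "u \<in> KS S"
  shows "dualV S norm_inf u = (\<Sum>i\<in>S. u $ i)"
  unfolding dualV_def
proof (rule cSup_eq_maximum)
  have "u \<bullet> proj S 1 = (\<Sum>i\<in>S. u $ i)"
    using inner_VS[OF KS_imp_VS[OF assms(2)]] by (simp add: proj_def)
  then show "(\<Sum>i\<in>S. u $ i) \<in> {u \<bullet> x | x. x \<in> VS S \<and> norm_inf x = 1}"
    using proj_in_VS norm_inf_proj_1[OF assms(1)] by force
next
  fix y assume "y \<in> {u \<bullet> x | x. x \<in> VS S \<and> norm_inf x = 1}"
  then obtain x where x: "y = u \<bullet> x" "norm_inf x = 1" by blast
  have "u \<bullet> x = (\<Sum>i\<in>S. u $ i * x $ i)" by (rule inner_VS[OF KS_imp_VS[OF assms(2)]])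
  also have "\<dots> \<le> (\<Sum>i\<in>S. u $ i)"
  proof (rule sum_mono)
    fix i
    have "x $ i \<le> 1" using x(2) norm_inf_le_1_iff[of x] abs_le_iff by fastforce
    moreover have "0 \<le> u $ i" using assms(2) by (simp add: mem_KS_iff)
    ultimately show "u $ i * x $ i \<le> u $ i" by (simp add: mult_left_le)
  qed
  finally show "y \<le> (\<Sum>i\<in>S. u $ i)" using x(1) by simp
qed

lemma dualV_norm_one:
  assumes "S \<noteq> {}" "u \<in> KS S"
  shows "dualV S norm_one u = Max ((\<lambda>i. u $ i) ` S)"
  unfolding dualV_def
proof (rule cSup_eq_maximum)
  let ?m = "Max ((\<lambda>i. u $ i) ` S)"
  have "?m \<in> (\<lambda>i. u $ i) ` S" using assms(1) by (intro Max_in) auto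
  then obtain j where j: "j \<in> S" "u $ j = ?m" by (metis imageE)
  have "norm_one (axis j (1::real)) = 1" by (rule norm_one_axis)
  then show "?m \<in> {u \<bullet> x | x. x \<in> VS S \<and> norm_one x = 1}"
    using j KS_imp_VS[OF axis_in_KS[OF j(1)]] by (intro CollectI exI[of _ "axis j 1"]) (simp add: inner_axis)
next
  let ?m = "Max ((\<lambda>i. u $ i) ` S)"
  fix y assume "y \<in> {u \<bullet> x | x. x \<in> VS S \<and> norm_one x = 1}"
  then obtain x where x: "y = u \<bullet> x" "norm_one x = 1" by blast
  have "0 \<le> ?m" using assms by (auto simp: mem_KS_iff Max_ge_iff)
  have "u \<bullet> x = (\<Sum>i\<in>S. u $ i * x $ i)" by (rule inner_VS[OF KS_imp_VS[OF assms(2)]])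
  also have "\<dots> \<le> (\<Sum>i\<in>S. ?m * \<bar>x $ i\<bar>)"
  proof (rule sum_mono)
    fix i assume "i \<in> S"
    then have "0 \<le> u $ i" "u $ i \<le> ?m" using assms(2) by (auto simp: mem_KS_iff)
    then have "u $ i * x $ i \<le> u $ i * \<bar>x $ i\<bar>" by (simp add: mult_left_mono)
    also have "\<dots> \<le> ?m * \<bar>x $ i\<bar>" using \<open>u $ i \<le> ?m\<close> by (simp add: mult_right_mono)
    finally show "u $ i * x $ i \<le> ?m * \<bar>x $ i\<bar>" .
  qed
  also have "\<dots> \<le> (\<Sum>i\<in>UNIV. ?m * \<bar>x $ i\<bar>)"
    using \<open>0 \<le> ?m\<close> by (intro sum_mono2) auto
  also have "\<dots> = ?m" using x(2) by (simp add: norm_one_def sum_distrib_left[symmetric])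
  finally show "y \<le> ?m" using x(1) by simp
qed

lemma dualV_norm:
  assumes "S \<noteq> {}" "u \<in> VS S"
  shows "dualV S norm u = norm u"
  unfolding dualV_def
proof (rule cSup_eq_maximum)
  show "norm u \<in> {u \<bullet> x | x. x \<in> VS S \<and> norm x = 1}"
  proof (cases "u = 0")
    case True
    obtain j where "j \<in> S" using assms(1) by blast
    then show ?thesis
      using True KS_imp_VS[OF axis_in_KS] by (intro CollectI exI[of _ "axis j 1"]) simp
  next
    case False
    then show ?thesis
      using assms(2) by (intro CollectI exI[of _ "(1 / norm u) *\<^sub>R u"])
        (simp add: mem_VS_iff dot_square_norm power2_eq_square)
  qed
next
  fix y assume "y \<in> {u \<bullet> x | x. x \<in> VS S \<and> norm x = 1}"
  then obtain x where "y = u \<bullet> x" "norm x = 1" by blast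
  then show "y \<le> norm u" using norm_cauchy_schwarz[of u x] by simp
qed

section \<open>Subspaces meeting the interior of the cone\<close>

text \<open>In the notation of the paper, \<open>M\<close> is \<open>L'\<close> inside \<open>V' = VS S\<close>, \<open>p\<close> witnesses
  \<open>L' \<inter> int K' \<noteq> {}\<close>, \<open>Mplus = L' \<inter> K'\<close> and \<open>Mperp\<close> is the complement of \<open>L'\<close> within \<open>V'\<close>.\<close>

locale interior_subspace = coord_normed +
  fixes M and p
  assumes subspace_M: "subspace M" and M_sub_VS: "M \<subseteq> VS S"
    and p_in_M: "p \<in> M" and p_pos: "\<forall>i\<in>S. 0 < p $ i"
begin

definition Mplus :: "(real^'a) set" where
  "Mplus = {x \<in> M. nonneg x}"

definition support :: "real^'a \<Rightarrow> real" where
  "support u = Sup {u \<bullet> x | x. x \<in> Mplus \<and> nrm x = 1}"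

lemma Mplus_imp_KS: "x \<in> Mplus \<Longrightarrow> x \<in> KS S"
  using M_sub_VS by (auto simp: Mplus_def KS_def)

lemma Mplus_imp_VS: "x \<in> Mplus \<Longrightarrow> x \<in> VS S"
  using Mplus_imp_KS KS_imp_VS by blast

lemma Mplus_imp_nonneg: "x \<in> Mplus \<Longrightarrow> 0 \<le> x $ i"
  by (simp add: Mplus_def nonneg_def)

lemma Mplus_scaleR: "x \<in> Mplus \<Longrightarrow> 0 \<le> c \<Longrightarrow> c *\<^sub>R x \<in> Mplus"
  using subspace_M by (auto simp: Mplus_def nonneg_def subspace_scale)

lemma Mplus_eq: "Mplus = M \<inter> KS UNIV"
  by (auto simp: Mplus_def KS_def VS_def)

lemma closed_Mplus: "closed Mplus"
  unfolding Mplus_eq using closed_subspace[OF subspace_M] closed_KS by blast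

lemma convex_Mplus: "convex Mplus"
  unfolding Mplus_eq using subspace_imp_convex[OF subspace_M] convex_KS by (rule convex_Int)

lemma compact_Mplus_ball: "compact {x \<in> Mplus. nrm x \<le> r}"
  by (rule is_norm_compact_ball[OF is_norm closed_Mplus])

lemma convex_Mplus_ball: "convex {x \<in> Mplus. nrm x \<le> r}"
  using convex_Int[OF convex_Mplus is_norm_convex_cball[OF is_norm]] by (simp add: Int_def)

lemma normalize_in_Mplus:
  assumes "x \<in> M" "nonneg x" "x \<noteq> 0"
  shows "(1 / nrm x) *\<^sub>R x \<in> Mplus" "nrm ((1 / nrm x) *\<^sub>R x) = 1"
  using Mplus_scaleR[of x "1 / nrm x"] assms is_norm_nonneg[OF is_norm, of x] nrm_unit
  by (auto simp: Mplus_def)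

lemma exists_unit_in_Mplus: "\<exists>x\<in>Mplus. nrm x = 1"
proof -
  have "p \<in> VS S" using p_in_M M_sub_VS by blast
  then have "nonneg p"
    unfolding nonneg_def mem_VS_iff using p_pos by (metis order.refl less_imp_le)
  moreover have "p \<noteq> 0"
    using p_pos S_ne by force
  ultimately show ?thesis
    using normalize_in_Mplus[OF p_in_M] by blast
qed

lemma support_values_bdd: "bdd_above {u \<bullet> x | x. x \<in> Mplus \<and> nrm x = 1}"
  by (rule bdd_above_mono[OF dual_values_bdd]) (auto dest: Mplus_imp_VS)

lemma support_upper: "x \<in> Mplus \<Longrightarrow> nrm x = 1 \<Longrightarrow> u \<bullet> x \<le> support u"
  unfolding support_def by (rule cSup_upper[OF _ support_values_bdd]) blast

lemma support_least: "(\<And>x. x \<in> Mplus \<Longrightarrow> nrm x = 1 \<Longrightarrow> u \<bullet> x \<le> r) \<Longrightarrow> support u \<le> r"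
  unfolding support_def using exists_unit_in_Mplus by (intro cSup_least) auto

lemma support_nonneg: "u \<in> KS S \<Longrightarrow> 0 \<le> support u"
  using exists_unit_in_Mplus support_upper
  by (meson KS_imp_nonneg Mplus_imp_KS inner_nonneg_nonneg order_trans)

lemma support_mono: "u - w \<in> KS S \<Longrightarrow> support w \<le> support u"
proof (rule support_least)
  fix x assume x: "x \<in> Mplus" "nrm x = 1" and "u - w \<in> KS S"
  then have "0 \<le> (u - w) \<bullet> x"
    by (intro inner_nonneg_nonneg) (auto dest: KS_imp_nonneg Mplus_imp_KS)
  then show "w \<bullet> x \<le> support u"
    using support_upper[OF x, of u] by (simp add: inner_diff_left)
qed

lemma support_scaleR: "0 \<le> c \<Longrightarrow> support (c *\<^sub>R u) = c * support u"
proof (cases "c = 0")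
  case True
  have "support 0 \<le> 0" by (rule support_least) simp
  with True show ?thesis using support_nonneg[OF zero_in_KS] by simp
next
  case False
  assume "0 \<le> c"
  with False have c: "0 < c" by simp
  have "support (c *\<^sub>R u) \<le> c * support u"
    using support_upper c by (intro support_least) (simp add: mult_left_mono)
  moreover have "support u \<le> support (c *\<^sub>R u) / c"
  proof (rule support_least)
    fix x assume "x \<in> Mplus" "nrm x = 1"
    then have "(c *\<^sub>R u) \<bullet> x \<le> support (c *\<^sub>R u)" by (rule support_upper)
    then show "u \<bullet> x \<le> support (c *\<^sub>R u) / c" using c by (simp add: le_divide_eq mult.commute)
  qed
  ultimately show ?thesis using c by (simp add: field_simps)
qed

abbreviation Mperp :: "(real^'a) set" where
  "Mperp \<equiv> orthV S M"

lemma Mperp_inner: "y \<in> Mperp \<Longrightarrow> x \<in> M \<Longrightarrow> y \<bullet> x = 0"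
  by (auto simp: orthV_def orthogonal_comp_def orthogonal_def inner_commute)

lemma subspace_Mperp: "subspace Mperp"
  unfolding orthV_def by (intro subspace_inter subspace_orthogonal_comp subspace_VS)

lemma Mperp_imp_VS: "y \<in> Mperp \<Longrightarrow> y \<in> VS S"
  by (simp add: orthV_def)

lemma mem_M_if_perp_Mperp:
  assumes "z \<in> VS S" "\<And>w. w \<in> Mperp \<Longrightarrow> z \<bullet> w = 0"
  shows "z \<in> M"
proof -
  obtain y r where y: "y \<in> span M" and r: "\<And>w. w \<in> span M \<Longrightarrow> orthogonal r w"
    and z: "z = y + r"
    using orthogonal_subspace_decomp_exists[of M z] by metis
  have "y \<in> M" using y subspace_M span_eq_iff by blast
  then have "r \<in> VS S"
    using z assms(1) M_sub_VS subspace_diff[OF subspace_VS] by (metis add_diff_cancel_left' subsetD)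
  then have "r \<in> Mperp"
    using r span_base by (auto simp: orthV_def orthogonal_comp_def orthogonal_commute)
  then have "z \<bullet> r = 0" by (rule assms(2))
  moreover have "y \<bullet> r = 0" using r[OF y] by (simp add: orthogonal_def inner_commute)
  ultimately have "r \<bullet> r = 0" using z by (simp add: inner_add_left)
  then show ?thesis using z \<open>y \<in> M\<close> by simp
qed

lemma proj_separator_in_Mplus:
  assumes "U \<noteq> {}"
    and sep: "\<And>u z y. u \<in> U \<Longrightarrow> z \<in> KS S \<Longrightarrow> y \<in> Mperp \<Longrightarrow> b < a \<bullet> (u + z - y)"
  shows "proj S a \<in> Mplus"
proof -
  obtain u0 where u0: "u0 \<in> U" using assms(1) by blast
  have "proj S a \<in> KS S"
  proof (rule proj_in_KS_if_bounded_below)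
    fix z assume "z \<in> KS S"
    then show "b < a \<bullet> u0 + a \<bullet> z"
      using sep[OF u0 _ subspace_0[OF subspace_Mperp]] by (simp add: inner_add_right)
  qed
  moreover have "proj S a \<bullet> w = 0" if "w \<in> Mperp" for w
  proof (rule line_bounded_below_imp_zero)
    fix t :: real
    have "b < a \<bullet> (u0 + 0 - (- t) *\<^sub>R w)"
      using sep u0 zero_in_KS subspace_scale[OF subspace_Mperp that] by blast
    then show "b < a \<bullet> u0 + t * (proj S a \<bullet> w)"
      using inner_proj[OF Mperp_imp_VS[OF that]] by (simp add: inner_add_right)
  qed
  then have "proj S a \<in> M" by (rule mem_M_if_perp_Mperp[OF proj_in_VS])
  ultimately show ?thesis by (simp add: Mplus_def KS_def)
qed

lemma cover_level_nonneg:
  assumes "U \<subseteq> KS S" and cover: "\<And>x. x \<in> Mplus \<Longrightarrow> nrm x = 1 \<Longrightarrow> \<exists>u\<in>U. u \<bullet> x \<le> r"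
  shows "0 \<le> r"
proof -
  obtain x where x: "x \<in> Mplus" "nrm x = 1" using exists_unit_in_Mplus by blast
  then obtain u where "u \<in> U" "u \<bullet> x \<le> r" using cover by blast
  moreover have "0 \<le> u \<bullet> x"
    using \<open>u \<in> U\<close> assms(1) x by (intro inner_nonneg_nonneg) (auto dest: KS_imp_nonneg Mplus_imp_KS)
  ultimately show ?thesis by simp
qed

text \<open>Otherwise separate \<open>U + KS S - Mperp\<close> from the compact dual ball of radius \<open>r\<close>: the
  normalised separator is a unit vector of \<open>Mplus\<close> that no \<open>u \<in> U\<close> covers.\<close>

lemma dual_dist_le_of_cover:
  assumes U: "U \<subseteq> KS S" "convex U" "U \<noteq> {}" and "0 < \<delta>"
    and cover: "\<And>x. x \<in> Mplus \<Longrightarrow> nrm x = 1 \<Longrightarrow> \<exists>u\<in>U. u \<bullet> x \<le> r"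
  shows "\<exists>u\<in>U. \<exists>z\<in>KS S. \<exists>y\<in>Mperp. dual (u + z - y) \<le> r + \<delta>"
proof (rule ccontr)
  assume far: "\<not> ?thesis"
  define D where "D = (\<Union>w\<in>(\<Union>u\<in>U. \<Union>z\<in>KS S. {u + z}). \<Union>y\<in>Mperp. {w - y})"
  define Q where "Q = {d \<in> VS S. dual d \<le> r}"
  have D_iff: "d \<in> D \<longleftrightarrow> (\<exists>u\<in>U. \<exists>z\<in>KS S. \<exists>y\<in>Mperp. d = u + z - y)" for d
    by (auto simp: D_def)
  have "0 \<le> r" by (rule cover_level_nonneg[OF U(1) cover])
  then have "0 \<in> Q"
    using dual_scaleR[of 0 0] subspace_0[OF subspace_VS] by (simp add: Q_def)
  then have Q: "convex Q" "compact Q" "Q \<noteq> {}"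
    using convex_dual_ball compact_dual_ball by (auto simp: Q_def)
  have "convex D"
    unfolding D_def
    by (intro convex_differences convex_sums U(2) convex_KS subspace_imp_convex[OF subspace_Mperp])
  moreover have "Q \<inter> closure D = {}"
    using closure_dual_ball_approx[OF _ _ \<open>0 < \<delta>\<close>] far by (fastforce simp: Q_def D_iff)
  ultimately obtain a b where ab: "\<And>d. d \<in> Q \<Longrightarrow> a \<bullet> d < b" "\<And>d. d \<in> closure D \<Longrightarrow> b < a \<bullet> d"
    using separating_hyperplane_compact_closed[OF Q convex_closure closed_closure] by metis
  have sep: "b < a \<bullet> (u + z - y)" if "u \<in> U" "z \<in> KS S" "y \<in> Mperp" for u z y
  proof -
    have "u + z - y \<in> D" using that D_iff by blast
    then show ?thesis using ab(2) closure_subset by blast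
  qed
  define g where "g = proj S a"
  have sep_U: "b < g \<bullet> u" if "u \<in> U" for u
    using sep[OF that zero_in_KS subspace_0[OF subspace_Mperp]] inner_proj[OF KS_imp_VS, of u S a]
      that U(1) by (auto simp: g_def)
  have "g \<in> Mplus" unfolding g_def by (rule proj_separator_in_Mplus[OF U(3) sep])
  have "r * nrm g < b"
    unfolding g_def using \<open>0 \<le> r\<close> ab(1) by (intro nrm_proj_lt_of_dual_ball) (auto simp: Q_def)
  have "g \<noteq> 0"
  proof
    assume "g = 0"
    then show False
      using \<open>r * nrm g < b\<close> sep_U U(3) is_norm_zero[OF is_norm] by force
  qed
  then obtain u where u: "u \<in> U" "u \<bullet> ((1 / nrm g) *\<^sub>R g) \<le> r"
    using cover normalize_in_Mplus[of g] \<open>g \<in> Mplus\<close> unfolding Mplus_def by blast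
  then have "g \<bullet> u \<le> r * nrm g"
    using is_norm_pos[OF is_norm \<open>g \<noteq> 0\<close>] by (simp add: inner_commute field_simps)
  then show False using sep_U[OF u(1)] \<open>r * nrm g < b\<close> by simp
qed

lemma support_le_dual_dist: "y \<in> Mperp \<Longrightarrow> support u \<le> dual (u - y)"
proof (rule support_least)
  fix x assume y: "y \<in> Mperp" and x: "x \<in> Mplus" "nrm x = 1"
  then have "(u - y) \<bullet> x \<le> dual (u - y)" by (intro dual_inner_le_unit Mplus_imp_VS)
  moreover have "y \<bullet> x = 0" using Mperp_inner[OF y] x(1) by (simp add: Mplus_def)
  ultimately show "u \<bullet> x \<le> dual (u - y)" by (simp add: inner_diff_left)
qed

lemma nuV_le:
  assumes "u \<in> KS S" "y \<in> Mperp" "dualV S tnrm u = 1"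
  shows "nuV S nrm tnrm M \<le> dual (u - y)"
  unfolding nuV_def using assms dual_nonneg by (intro cInf_lower bdd_belowI[of _ 0]) auto

lemma nuV_ge_of_support:
  assumes "is_norm tnrm"
    and "\<And>u. u \<in> KS S \<Longrightarrow> dualV S tnrm u = 1 \<Longrightarrow> r \<le> support u"
  shows "r \<le> nuV S nrm tnrm M"
proof -
  interpret T: coord_normed S tnrm using S_ne assms(1) by unfold_locales
  obtain u where "u \<in> KS S" "T.dual u = 1" using T.exists_dual_unit_in_KS by blast
  then show ?thesis
    unfolding nuV_def using assms(2) support_le_dual_dist subspace_0[OF subspace_Mperp]
    by (intro cInf_greatest) (auto intro: order_trans)
qed

text \<open>Monotonicity of the dual of \<open>tnrm\<close> on the cone is what allows \<open>u + z\<close> to be rescaled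
  back onto the dual unit sphere.\<close>

lemma nuV_le_of_cover:
  assumes "is_norm tnrm"
    and mono: "\<And>u z. u \<in> KS S \<Longrightarrow> z \<in> KS S \<Longrightarrow> dualV S tnrm u \<le> dualV S tnrm (u + z)"
    and U: "U \<subseteq> {u \<in> KS S. dualV S tnrm u = 1}" "convex U" "U \<noteq> {}"
    and cover: "\<And>x. x \<in> Mplus \<Longrightarrow> nrm x = 1 \<Longrightarrow> \<exists>u\<in>U. u \<bullet> x \<le> r"
  shows "nuV S nrm tnrm M \<le> r"
proof (rule field_le_epsilon)
  fix \<delta> :: real assume "0 < \<delta>"
  interpret T: coord_normed S tnrm using S_ne assms(1) by unfold_locales
  have "U \<subseteq> KS S" using U(1) by blast
  then obtain u z y where uzy: "u \<in> U" "z \<in> KS S" "y \<in> Mperp" "dual (u + z - y) \<le> r + \<delta>"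
    using dual_dist_le_of_cover[OF _ U(2,3) \<open>0 < \<delta>\<close> cover] by blast
  have u: "u \<in> KS S" "T.dual u = 1" using uzy(1) U(1) by auto
  define t where "t = T.dual (u + z)"
  have "1 \<le> t" using mono[OF u(1) uzy(2)] u(2) by (simp add: t_def)
  have "(1 / t) *\<^sub>R (u + z) \<in> KS S"
    using \<open>1 \<le> t\<close> by (intro KS_scaleR KS_add u(1) uzy(2)) simp
  moreover have "(1 / t) *\<^sub>R y \<in> Mperp"
    by (rule subspace_scale[OF subspace_Mperp uzy(3)])
  moreover have "T.dual ((1 / t) *\<^sub>R (u + z)) = 1"
    using \<open>1 \<le> t\<close> by (simp add: T.dual_scaleR t_def)
  ultimately have "nuV S nrm tnrm M \<le> dual ((1 / t) *\<^sub>R (u + z) - (1 / t) *\<^sub>R y)"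
    by (rule nuV_le)
  also have "\<dots> = (1 / t) * dual (u + z - y)"
    using \<open>1 \<le> t\<close> by (simp add: dual_scaleR flip: scaleR_diff_right)
  also have "\<dots> \<le> dual (u + z - y)"
    using \<open>1 \<le> t\<close> dual_nonneg[of "u + z - y"] by (simp add: divide_le_eq mult_le_cancel_left1)
  finally show "nuV S nrm tnrm M \<le> r + \<delta>" using uzy(4) by simp
qed

lemma normalize_dominating:
  assumes x: "x \<in> M" "nrm x \<le> 1" and v: "v \<in> KS S" "v \<noteq> 0"
    and "0 < t" and xt: "x - t *\<^sub>R v \<in> KS S"
  shows "(1 / nrm x) *\<^sub>R x \<in> Mplus" "nrm ((1 / nrm x) *\<^sub>R x) = 1"
    and "(1 / nrm x) *\<^sub>R x - t *\<^sub>R v \<in> KS S"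
proof -
  have "x \<in> KS S"
    using KS_add[OF xt KS_scaleR[OF v(1), of t]] \<open>0 < t\<close> by simp
  have "x \<noteq> 0"
  proof
    assume "x = 0"
    then have "\<forall>i. t * v $ i \<le> 0" using xt by (simp add: mem_KS_iff)
    then have "\<forall>i. v $ i = 0" using v(1) \<open>0 < t\<close> by (simp add: mem_KS_iff mult_le_0_iff order_antisym)
    then show False using v(2) by (simp add: vec_eq_iff)
  qed
  then show "(1 / nrm x) *\<^sub>R x \<in> Mplus" "nrm ((1 / nrm x) *\<^sub>R x) = 1"
    using normalize_in_Mplus x(1) KS_imp_nonneg[OF \<open>x \<in> KS S\<close>] by auto
  have "0 \<le> 1 / nrm x - 1" using x(2) is_norm_pos[OF is_norm \<open>x \<noteq> 0\<close>] by simp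
  moreover have "(1 / nrm x) *\<^sub>R x - t *\<^sub>R v = (x - t *\<^sub>R v) + (1 / nrm x - 1) *\<^sub>R x"
    by (simp add: algebra_simps)
  ultimately show "(1 / nrm x) *\<^sub>R x - t *\<^sub>R v \<in> KS S"
    using KS_add[OF xt KS_scaleR[OF \<open>x \<in> KS S\<close>]] by metis
qed

lemma sigmaV_le_of_bound:
  assumes v: "v \<in> KS S" "v \<noteq> 0" "tnrm v = 1" and "0 \<le> r"
    and bound: "\<And>x t. x \<in> Mplus \<Longrightarrow> nrm x = 1 \<Longrightarrow> x - t *\<^sub>R v \<in> KS S \<Longrightarrow> t \<le> r"
  shows "sigmaV S nrm tnrm M \<le> ereal r"
proof -
  have "lamV S v x \<le> ereal r" if x: "x \<in> M" "nrm x \<le> 1" for x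
    unfolding lamV_def
  proof (rule Sup_least, clarify)
    fix t assume xt: "x - t *\<^sub>R v \<in> KS S"
    show "ereal t \<le> ereal r"
    proof (cases "t \<le> 0")
      case False
      then show ?thesis
        using bound normalize_dominating[OF x v(1,2) _ xt] by simp
    qed (use \<open>0 \<le> r\<close> in simp)
  qed
  then have "Sup {lamV S v x | x. x \<in> M \<and> nrm x \<le> 1} \<le> ereal r"
    by (auto intro: Sup_least)
  then show ?thesis
    unfolding sigmaV_def using v by (intro Inf_lower2) auto
qed

text \<open>Otherwise a functional separating \<open>-r v\<close> from \<open>KS S - {x \<in> Mplus. nrm x \<le> 1}\<close> is a
  \<open>g \<in> KS S\<close> with \<open>support g < r (g \<bullet> v)\<close>.\<close>

lemma exists_dominating:
  assumes v: "v \<in> KS S" and bound: "\<And>g. g \<in> KS S \<Longrightarrow> r * (g \<bullet> v) \<le> support g"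
  shows "\<exists>x\<in>Mplus. nrm x \<le> 1 \<and> x - r *\<^sub>R v \<in> KS S"
proof (rule ccontr)
  assume none: "\<not> ?thesis"
  define B where "B = {x \<in> Mplus. nrm x \<le> 1}"
  define A where "A = (\<Union>z\<in>KS S. \<Union>x\<in>B. {z - x})"
  have "compact B" "convex B"
    unfolding B_def using compact_Mplus_ball convex_Mplus_ball by blast+
  have "closed A"
    unfolding A_def by (rule closed_compact_differences[OF closed_KS \<open>compact B\<close>])
  have "convex A"
    unfolding A_def by (rule convex_differences[OF convex_KS \<open>convex B\<close>])
  have "- (r *\<^sub>R v) \<notin> A"
  proof
    assume "- (r *\<^sub>R v) \<in> A"
    then obtain z x where "z \<in> KS S" "x \<in> B" "- (r *\<^sub>R v) = z - x" by (auto simp: A_def)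
    then have "x - r *\<^sub>R v \<in> KS S" by (metis add.commute add_uminus_conv_diff diff_add_cancel)
    with \<open>x \<in> B\<close> none show False by (auto simp: B_def)
  qed
  then obtain a b where ab: "a \<bullet> (- (r *\<^sub>R v)) < b" "\<And>w. w \<in> A \<Longrightarrow> b < a \<bullet> w"
    using separating_hyperplane_closed_point[OF \<open>convex A\<close> \<open>closed A\<close>] by blast
  have diff_in_A: "z - x \<in> A" if "z \<in> KS S" "x \<in> B" for z x
    using that by (auto simp: A_def)
  have "0 \<in> B"
    using subspace_0[OF subspace_M] is_norm_zero[OF is_norm] by (simp add: B_def Mplus_def nonneg_def)
  define g where "g = proj S a"
  have "g \<in> KS S"
    unfolding g_def
  proof (rule proj_in_KS_if_bounded_below[where c = 0])
    fix z assume "z \<in> KS S"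
    then have "z - 0 \<in> A" using diff_in_A \<open>0 \<in> B\<close> by blast
    then show "b < 0 + a \<bullet> z" using ab(2) by fastforce
  qed
  have "support g \<le> - b"
  proof (rule support_least)
    fix x assume "x \<in> Mplus" "nrm x = 1"
    then have "0 - x \<in> A" using diff_in_A[OF zero_in_KS] by (simp add: B_def)
    then have "b < a \<bullet> (0 - x)" by (rule ab(2))
    then show "g \<bullet> x \<le> - b"
      using inner_proj[OF Mplus_imp_VS[OF \<open>x \<in> Mplus\<close>]] by (simp add: g_def)
  qed
  moreover have "- b < r * (g \<bullet> v)"
    using ab(1) inner_proj[OF KS_imp_VS[OF v]] by (simp add: g_def)
  ultimately show False using bound[OF \<open>g \<in> KS S\<close>] by simp
qed

lemma sigmaV_ge_of_support:
  assumes "\<And>v g. v \<in> KS S \<Longrightarrow> tnrm v = 1 \<Longrightarrow> g \<in> KS S \<Longrightarrow> r * (g \<bullet> v) \<le> support g"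
  shows "ereal r \<le> sigmaV S nrm tnrm M"
  unfolding sigmaV_def
proof (rule Inf_greatest, clarify)
  fix v assume v: "v \<in> KS S" "tnrm v = 1"
  then obtain x where x: "x \<in> Mplus" "nrm x \<le> 1" "x - r *\<^sub>R v \<in> KS S"
    using exists_dominating[OF v(1) assms] by blast
  then have "ereal r \<le> lamV S v x"
    unfolding lamV_def by (intro Sup_upper) blast
  also have "\<dots> \<le> Sup {lamV S v x | x. x \<in> M \<and> nrm x \<le> 1}"
    using x by (intro Sup_upper) (auto simp: Mplus_def)
  finally show "ereal r \<le> Sup {lamV S v x | x. x \<in> M \<and> nrm x \<le> 1}" .
qed

section \<open>The three pairs of norms\<close>

definition maxmin :: real where
  "maxmin = Sup {Min ((\<lambda>i. x $ i) ` S) | x. x \<in> Mplus \<and> nrm x = 1}"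

lemma exists_Min_coord: "\<exists>i\<in>S. Min ((\<lambda>i. x $ i) ` S) = x $ i"
proof -
  have "Min ((\<lambda>i. x $ i) ` S) \<in> (\<lambda>i. x $ i) ` S" using S_ne by (intro Min_in) auto
  then show ?thesis by auto
qed

lemma Min_coord_le_maxmin: "x \<in> Mplus \<Longrightarrow> nrm x = 1 \<Longrightarrow> Min ((\<lambda>i. x $ i) ` S) \<le> maxmin"
proof -
  obtain j where "j \<in> S" using S_ne by blast
  have "bdd_above {Min ((\<lambda>i. x $ i) ` S) | x. x \<in> Mplus \<and> nrm x = 1}"
  proof (rule bdd_aboveI, clarify)
    fix x assume "x \<in> Mplus" "nrm x = 1"
    then have "axis j 1 \<bullet> x \<le> support (axis j 1)" by (rule support_upper)
    moreover have "Min ((\<lambda>i. x $ i) ` S) \<le> x $ j" using \<open>j \<in> S\<close> by simp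
    ultimately show "Min ((\<lambda>i. x $ i) ` S) \<le> support (axis j 1)" by (simp add: inner_axis')
  qed
  then show "x \<in> Mplus \<Longrightarrow> nrm x = 1 \<Longrightarrow> Min ((\<lambda>i. x $ i) ` S) \<le> maxmin"
    unfolding maxmin_def by (intro cSup_upper) auto
qed

lemma maxmin_nonneg: "0 \<le> maxmin"
proof -
  obtain x where x: "x \<in> Mplus" "nrm x = 1" using exists_unit_in_Mplus by blast
  obtain i where "i \<in> S" "Min ((\<lambda>i. x $ i) ` S) = x $ i" using exists_Min_coord by blast
  then show ?thesis using Min_coord_le_maxmin[OF x] Mplus_imp_nonneg[OF x(1), of i] by linarith
qed

lemma maxmin_mult_sum_le_support:
  assumes "u \<in> KS S"
  shows "maxmin * (\<Sum>i\<in>S. u $ i) \<le> support u"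
proof (cases "(\<Sum>i\<in>S. u $ i) = 0")
  case False
  then have pos: "0 < (\<Sum>i\<in>S. u $ i)"
    using assms sum_nonneg[of S "\<lambda>i. u $ i"] by (simp add: mem_KS_iff)
  have "maxmin \<le> support u / (\<Sum>i\<in>S. u $ i)"
    unfolding maxmin_def
  proof (rule cSup_least, use exists_unit_in_Mplus in blast, clarify)
    fix x assume x: "x \<in> Mplus" "nrm x = 1"
    have "Min ((\<lambda>i. x $ i) ` S) * (\<Sum>i\<in>S. u $ i) = (\<Sum>i\<in>S. u $ i * Min ((\<lambda>i. x $ i) ` S))"
      by (simp add: sum_distrib_right mult.commute)
    also have "\<dots> \<le> (\<Sum>i\<in>S. u $ i * x $ i)"
      using assms by (intro sum_mono mult_left_mono) (auto simp: mem_KS_iff)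
    also have "\<dots> = u \<bullet> x" by (rule inner_VS[OF KS_imp_VS[OF assms], symmetric])
    also have "\<dots> \<le> support u" by (rule support_upper[OF x])
    finally show "Min ((\<lambda>i. x $ i) ` S) \<le> support u / (\<Sum>i\<in>S. u $ i)"
      using pos by (simp add: le_divide_eq)
  qed
  then show ?thesis using pos by (simp add: le_divide_eq mult.commute)
qed (simp add: support_nonneg[OF assms])

lemma nuV_norm_inf: "nuV S nrm norm_inf M = maxmin"
proof (rule antisym)
  define U where "U = {u \<in> KS S. (\<Sum>i\<in>S. u $ i) = 1}"
  have U_eq: "U = {u \<in> KS S. dualV S norm_inf u = 1}"
    by (auto simp: U_def dualV_norm_inf[OF S_ne])
  have "convex U"
    unfolding U_def by (rule convexI) (auto simp: KS_add KS_scaleR sum.distrib sum_distrib_left[symmetric])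
  have axis_in_U: "axis i 1 \<in> U" if "i \<in> S" for i
    using that axis_in_KS[OF that] by (simp add: U_def axis_def sum.delta cong: if_cong)
  show "nuV S nrm norm_inf M \<le> maxmin"
  proof (rule nuV_le_of_cover[OF is_norm_inf _ _ \<open>convex U\<close>])
    show "dualV S norm_inf u \<le> dualV S norm_inf (u + z)" if "u \<in> KS S" "z \<in> KS S" for u z
      using that KS_add[OF that] by (simp add: dualV_norm_inf[OF S_ne] sum.distrib mem_KS_iff sum_nonneg)
    show "U \<subseteq> {u \<in> KS S. dualV S norm_inf u = 1}" "U \<noteq> {}"
      using U_eq axis_in_U S_ne by auto
    show "\<exists>u\<in>U. u \<bullet> x \<le> maxmin" if "x \<in> Mplus" "nrm x = 1" for x
    proof -
      obtain i where "i \<in> S" "Min ((\<lambda>i. x $ i) ` S) = x $ i" using exists_Min_coord by blast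
      then show ?thesis
        using axis_in_U Min_coord_le_maxmin[OF that] by (force simp: inner_axis')
    qed
  qed
  show "maxmin \<le> nuV S nrm norm_inf M"
    using maxmin_mult_sum_le_support
    by (intro nuV_ge_of_support[OF is_norm_inf]) (metis dualV_norm_inf[OF S_ne] mult_1_right)
qed

lemma sigmaV_norm_inf: "sigmaV S nrm norm_inf M = ereal maxmin"
proof (rule antisym)
  show "sigmaV S nrm norm_inf M \<le> ereal maxmin"
  proof (rule sigmaV_le_of_bound[where v = "proj S 1"])
    show "proj S 1 \<in> KS S" by (simp add: mem_KS_iff proj_def)
    show "proj S 1 \<noteq> 0" using S_ne by (auto simp: proj_def vec_eq_iff)
    show "norm_inf (proj S 1) = 1" "0 \<le> maxmin" by (rule norm_inf_proj_1[OF S_ne] maxmin_nonneg)+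
    fix x t assume x: "x \<in> Mplus" "nrm x = 1" and "x - t *\<^sub>R proj S 1 \<in> KS S"
    then have "\<forall>i\<in>S. 0 \<le> (x - t *\<^sub>R proj S 1) $ i" by (simp add: mem_KS_iff)
    then have "\<forall>i\<in>S. t \<le> x $ i" by (simp add: proj_1_index)
    then have "t \<le> Min ((\<lambda>i. x $ i) ` S)" using S_ne by simp
    then show "t \<le> maxmin" using Min_coord_le_maxmin[OF x] by simp
  qed
  show "ereal maxmin \<le> sigmaV S nrm norm_inf M"
  proof (rule sigmaV_ge_of_support)
    fix v g assume v: "v \<in> KS S" "norm_inf v = 1" and g: "g \<in> KS S"
    have "g \<bullet> v \<le> (\<Sum>i\<in>S. g $ i)"
      unfolding inner_VS[OF KS_imp_VS[OF g]]
    proof (rule sum_mono)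
      fix i
      have "v $ i \<le> 1" using v(2) norm_inf_le_1_iff[of v] abs_le_iff by fastforce
      then show "g $ i * v $ i \<le> g $ i" using g by (simp add: mem_KS_iff mult_left_le)
    qed
    then show "maxmin * (g \<bullet> v) \<le> support g"
      using maxmin_mult_sum_le_support[OF g] maxmin_nonneg
      by (meson mult_left_mono order_trans)
  qed
qed

definition minmax :: real where
  "minmax = Min ((\<lambda>i. support (axis i 1)) ` S)"

lemma minmax_le: "i \<in> S \<Longrightarrow> minmax \<le> support (axis i 1)"
  by (simp add: minmax_def)

lemma exists_minmax: "\<exists>j\<in>S. support (axis j 1) = minmax"
proof -
  have "minmax \<in> (\<lambda>i. support (axis i 1)) ` S"
    unfolding minmax_def using S_ne by (intro Min_in) auto
  then show ?thesis by auto
qed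

lemma minmax_nonneg: "0 \<le> minmax"
  using exists_minmax support_nonneg[OF axis_in_KS] by force

lemma coord_mult_support_axis_le:
  assumes "g \<in> KS S"
  shows "g $ i * support (axis i 1) \<le> support g"
proof -
  have "g $ i * support (axis i 1) = support (g $ i *\<^sub>R axis i 1)"
    using assms by (simp add: support_scaleR mem_KS_iff)
  also have "\<dots> \<le> support g"
    using assms by (intro support_mono) (auto simp: mem_KS_iff axis_def)
  finally show ?thesis .
qed

lemma nuV_norm_one: "nuV S nrm norm_one M = minmax"
proof (rule antisym)
  obtain j where j: "j \<in> S" "support (axis j 1) = minmax" using exists_minmax by blast
  have "dualV S norm_one (axis j 1) = Max ((\<lambda>i. axis j 1 $ i) ` S)"
    by (rule dualV_norm_one[OF S_ne axis_in_KS[OF j(1)]])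
  also have "\<dots> = 1"
    by (rule Max_eqI) (use j(1) in \<open>auto simp: axis_def\<close>)
  finally have dual_axis: "dualV S norm_one (axis j 1) = 1" .
  show "nuV S nrm norm_one M \<le> minmax"
  proof (rule nuV_le_of_cover[OF is_norm_one _ _ convex_singleton])
    show "dualV S norm_one u \<le> dualV S norm_one (u + z)" if "u \<in> KS S" "z \<in> KS S" for u z
    proof -
      have "u $ i \<le> Max ((\<lambda>i. (u + z) $ i) ` S)" if "i \<in> S" for i
        using \<open>z \<in> KS S\<close> that by (intro order_trans[OF _ Max_ge[of _ "(u + z) $ i"]])
          (auto simp: mem_KS_iff)
      then show ?thesis
        using that KS_add[OF that] S_ne by (simp add: dualV_norm_one[OF S_ne])
    qed
    show "{axis j 1} \<subseteq> {u \<in> KS S. dualV S norm_one u = 1}" "{axis j 1} \<noteq> {}"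
      using axis_in_KS[OF j(1)] dual_axis by auto
    show "\<exists>u\<in>{axis j 1}. u \<bullet> x \<le> minmax" if "x \<in> Mplus" "nrm x = 1" for x
      using support_upper[OF that, of "axis j 1"] j(2) by simp
  qed
  show "minmax \<le> nuV S nrm norm_one M"
  proof (rule nuV_ge_of_support[OF is_norm_one])
    fix u assume u: "u \<in> KS S" "dualV S norm_one u = 1"
    have "Max ((\<lambda>i. u $ i) ` S) \<in> (\<lambda>i. u $ i) ` S" using S_ne by (intro Max_in) auto
    then obtain i where "i \<in> S" "u $ i = 1" using u by (auto simp: dualV_norm_one[OF S_ne])
    then show "minmax \<le> support u"
      using minmax_le coord_mult_support_axis_le[OF u(1), of i] by force
  qed
qed

lemma sigmaV_norm_one: "sigmaV S nrm norm_one M = ereal minmax"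
proof (rule antisym)
  obtain j where j: "j \<in> S" "support (axis j 1) = minmax" using exists_minmax by blast
  show "sigmaV S nrm norm_one M \<le> ereal minmax"
  proof (rule sigmaV_le_of_bound[where v = "axis j 1"])
    show "axis j 1 \<in> KS S" "axis j (1::real) \<noteq> 0" "0 \<le> minmax"
      using axis_in_KS[OF j(1)] minmax_nonneg by (auto simp: axis_eq_0_iff)
    show "norm_one (axis j (1::real)) = 1" by (rule norm_one_axis)
    fix x t assume x: "x \<in> Mplus" "nrm x = 1" and "x - t *\<^sub>R axis j 1 \<in> KS S"
    then have "\<forall>i. 0 \<le> (x - t *\<^sub>R axis j 1) $ i" unfolding mem_KS_iff by blast
    then have "0 \<le> (x - t *\<^sub>R axis j 1) $ j" ..
    then have "t \<le> x $ j" by (simp add: axis_def)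
    then have "t \<le> axis j 1 \<bullet> x" by (simp add: inner_axis')
    then show "t \<le> minmax" using support_upper[OF x, of "axis j 1"] j(2) by simp
  qed
  show "ereal minmax \<le> sigmaV S nrm norm_one M"
  proof (rule sigmaV_ge_of_support)
    fix v g assume v: "v \<in> KS S" "norm_one v = 1" and g: "g \<in> KS S"
    have "(\<Sum>i\<in>S. v $ i) = 1"
      using v by (simp add: norm_one_def mem_KS_iff sum.mono_neutral_left[of UNIV S])
    have "minmax * (g \<bullet> v) = (\<Sum>i\<in>S. v $ i * (g $ i * minmax))"
      by (simp add: inner_VS[OF KS_imp_VS[OF g]] sum_distrib_left algebra_simps)
    also have "\<dots> \<le> (\<Sum>i\<in>S. v $ i * support g)"
    proof (intro sum_mono mult_left_mono)
      fix i assume "i \<in> S"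
      then have "g $ i * minmax \<le> g $ i * support (axis i 1)"
        using g minmax_le by (simp add: mem_KS_iff mult_left_mono)
      then show "g $ i * minmax \<le> support g"
        using coord_mult_support_axis_le[OF g] by (meson order_trans)
    qed (use v in \<open>simp add: mem_KS_iff\<close>)
    also have "\<dots> = support g"
      using \<open>(\<Sum>i\<in>S. v $ i) = 1\<close> by (simp add: sum_distrib_right[symmetric])
    finally show "minmax * (g \<bullet> v) \<le> support g" .
  qed
qed

definition min_support :: real where
  "min_support = Inf {support u | u. u \<in> KS S \<and> norm u = 1}"

lemma min_support_le: "u \<in> KS S \<Longrightarrow> norm u = 1 \<Longrightarrow> min_support \<le> support u"
  unfolding min_support_def using support_nonneg by (intro cInf_lower bdd_belowI[of _ 0]) auto

lemma unit_sphere_KS_nonempty: "{support u | u. u \<in> KS S \<and> norm u = 1} \<noteq> {}"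
proof -
  obtain j where "j \<in> S" using S_ne by blast
  then show ?thesis using axis_in_KS by force
qed

lemma min_support_nonneg: "0 \<le> min_support"
  unfolding min_support_def using unit_sphere_KS_nonempty support_nonneg
  by (intro cInf_greatest) auto

lemma min_support_mult_norm_le: "g \<in> KS S \<Longrightarrow> min_support * norm g \<le> support g"
proof (cases "g = 0")
  case False
  assume g: "g \<in> KS S"
  have "min_support \<le> support ((1 / norm g) *\<^sub>R g)"
    using False g by (intro min_support_le KS_scaleR) auto
  then show ?thesis using False by (simp add: support_scaleR field_simps)
qed (simp add: support_nonneg)

lemma nuV_norm: "nuV S nrm norm M = min_support"
proof (rule antisym)
  show "nuV S nrm norm M \<le> min_support"
    unfolding min_support_def
  proof (rule cInf_greatest[OF unit_sphere_KS_nonempty], clarify)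
    fix u assume u: "u \<in> KS S" "norm u = 1"
    show "nuV S nrm norm M \<le> support u"
    proof (rule nuV_le_of_cover[OF is_norm_norm _ _ convex_singleton])
      show "dualV S norm u \<le> dualV S norm (u + z)" if "u \<in> KS S" "z \<in> KS S" for u z
        using that norm_le_norm_add_KS by (simp add: dualV_norm[OF S_ne] KS_imp_VS KS_add)
      show "{u} \<subseteq> {u \<in> KS S. dualV S norm u = 1}" "{u} \<noteq> {}"
        using u by (auto simp: dualV_norm[OF S_ne] KS_imp_VS)
    qed (use support_upper in blast)
  qed
  show "min_support \<le> nuV S nrm norm M"
    using min_support_le by (intro nuV_ge_of_support[OF is_norm_norm]) (simp add: dualV_norm[OF S_ne] KS_imp_VS)
qed

lemma sigmaV_norm: "sigmaV S nrm norm M = ereal min_support"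
proof (rule antisym)
  have "sigmaV S nrm norm M \<le> ereal (support u)" if u: "u \<in> KS S" "norm u = 1" for u
  proof (rule sigmaV_le_of_bound[where v = u])
    show "u \<in> KS S" "u \<noteq> 0" "norm u = 1" "0 \<le> support u"
      using u support_nonneg[OF u(1)] by auto
    fix x t assume x: "x \<in> Mplus" "nrm x = 1" and "x - t *\<^sub>R u \<in> KS S"
    then have "0 \<le> u \<bullet> (x - t *\<^sub>R u)" using u(1) by (intro inner_nonneg_nonneg KS_imp_nonneg)
    then have "t \<le> u \<bullet> x" using u(2) by (simp add: inner_diff_right dot_square_norm)
    then show "t \<le> support u" using support_upper[OF x, of u] by simp
  qed
  then have "sigmaV S nrm norm M \<le> (INF a\<in>{support u | u. u \<in> KS S \<and> norm u = 1}. ereal a)"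
    by (intro INF_greatest) blast
  also have "\<dots> = ereal min_support"
    unfolding min_support_def using unit_sphere_KS_nonempty support_nonneg
    by (intro ereal_Inf'[symmetric] bdd_belowI[of _ 0]) auto
  finally show "sigmaV S nrm norm M \<le> ereal min_support" .
  show "ereal min_support \<le> sigmaV S nrm norm M"
  proof (rule sigmaV_ge_of_support)
    fix v g assume v: "v \<in> KS S" "norm v = 1" and g: "g \<in> KS S"
    have "min_support * (g \<bullet> v) \<le> min_support * norm g"
      using norm_cauchy_schwarz[of g v] v(2) min_support_nonneg by (simp add: mult_left_mono)
    then show "min_support * (g \<bullet> v) \<le> support g"
      using min_support_mult_norm_le[OF g] by linarith
  qed
qed

end

section \<open>The Goldman--Tucker blocks\<close>

lemma GT_block_values:
  fixes L :: "(real^'n) set"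
  assumes "S \<noteq> {}" "subspace L"
    and p: "p \<in> L" "\<forall>i\<in>S. 0 < p $ i" "\<forall>i. i \<notin> S \<longrightarrow> p $ i = 0"
    and supp: "\<And>x. x \<in> L \<Longrightarrow> nonneg x \<Longrightarrow> x \<in> VS S"
  shows
   "(\<forall>nrm. is_norm nrm \<longrightarrow>
      sigmaV S nrm norm_inf (L \<inter> VS S) = ereal (nuV S nrm norm_inf (L \<inter> VS S)) \<and>
      nuV S nrm norm_inf (L \<inter> VS S) =
        Sup {Min ((\<lambda>i. x $ i) ` S) | x. x \<in> L \<and> nonneg x \<and> nrm x = 1}) \<and>
    (sigmaV S norm_one norm_inf (L \<inter> VS S) = ereal (nuV S norm_one norm_inf (L \<inter> VS S)) \<and>
      nuV S norm_one norm_inf (L \<inter> VS S) =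
        Sup {Min ((\<lambda>i. x $ i) ` S) | x. x \<in> L \<inter> std_simplex}) \<and>
    (\<forall>nrm. is_norm nrm \<longrightarrow>
      sigmaV S nrm norm_one (L \<inter> VS S) = ereal (nuV S nrm norm_one (L \<inter> VS S)) \<and>
      nuV S nrm norm_one (L \<inter> VS S) =
        Inf ((\<lambda>i. Sup {x $ i | x. x \<in> L \<and> nonneg x \<and> nrm x = 1}) ` S)) \<and>
    (sigmaV S norm_one norm_one (L \<inter> VS S) = ereal (nuV S norm_one norm_one (L \<inter> VS S)) \<and>
      nuV S norm_one norm_one (L \<inter> VS S) =
        Inf ((\<lambda>i. Sup {x $ i | x. x \<in> L \<inter> std_simplex}) ` S)) \<and>
    (sigmaV S norm norm (L \<inter> VS S) = ereal (nuV S norm norm (L \<inter> VS S)) \<and>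
      nuV S norm norm (L \<inter> VS S) =
        Inf {Sup {u \<bullet> x | x. x \<in> L \<and> nonneg x \<and> norm x = 1} | u. u \<in> KS S \<and> norm u = 1})"
proof -
  have inst: "interior_subspace S nrm (L \<inter> VS S) p" if "is_norm nrm" for nrm
    using assms that by unfold_locales (auto intro: subspace_inter subspace_VS simp: mem_VS_iff)
  have Mplus_L: "interior_subspace.Mplus (L \<inter> VS S) = {x. x \<in> L \<and> nonneg x}"
    using supp by (auto simp: interior_subspace.Mplus_def[OF inst[OF is_norm_norm]])
  have a: "sigmaV S nrm norm_inf (L \<inter> VS S) = ereal (nuV S nrm norm_inf (L \<inter> VS S)) \<and>
      nuV S nrm norm_inf (L \<inter> VS S) =
        Sup {Min ((\<lambda>i. x $ i) ` S) | x. x \<in> L \<and> nonneg x \<and> nrm x = 1}" if "is_norm nrm" for nrm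
  proof -
    interpret interior_subspace S nrm "L \<inter> VS S" p by (rule inst[OF that])
    show ?thesis using nuV_norm_inf sigmaV_norm_inf by (simp add: maxmin_def Mplus_L)
  qed
  have b: "sigmaV S nrm norm_one (L \<inter> VS S) = ereal (nuV S nrm norm_one (L \<inter> VS S)) \<and>
      nuV S nrm norm_one (L \<inter> VS S) =
        Inf ((\<lambda>i. Sup {x $ i | x. x \<in> L \<and> nonneg x \<and> nrm x = 1}) ` S)" if "is_norm nrm" for nrm
  proof -
    interpret interior_subspace S nrm "L \<inter> VS S" p by (rule inst[OF that])
    have "support (axis i 1) = Sup {x $ i | x. x \<in> L \<and> nonneg x \<and> nrm x = 1}" for i
      by (simp add: support_def Mplus_L inner_axis')
    then show ?thesis
      using nuV_norm_one sigmaV_norm_one S_ne by (simp add: minmax_def cInf_eq_Min)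
  qed
  have c: "sigmaV S norm norm (L \<inter> VS S) = ereal (nuV S norm norm (L \<inter> VS S)) \<and>
      nuV S norm norm (L \<inter> VS S) =
        Inf {Sup {u \<bullet> x | x. x \<in> L \<and> nonneg x \<and> norm x = 1} | u. u \<in> KS S \<and> norm u = 1}"
  proof -
    interpret interior_subspace S norm "L \<inter> VS S" p by (rule inst[OF is_norm_norm])
    show ?thesis using nuV_norm sigmaV_norm by (simp add: min_support_def support_def Mplus_L)
  qed
  show ?thesis
    using a b c a[OF is_norm_one] b[OF is_norm_one] by (simp add: std_simplex_iff)
qed

theorem mainTheorem15:
  fixes L :: "(real^'n) set" and m :: nat and B :: "'n set"
  assumes "L \<in> Gr m" and "1 \<le> m" and "m < CARD('n)"
    and "GT_partition L B"
  shows
  "(\<forall>nrm :: real^'n \<Rightarrow> real. is_norm nrm \<longrightarrow>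
      (B \<noteq> {} \<longrightarrow>
         sigmaV B nrm norm_inf (L \<inter> VS B) = ereal (nuV B nrm norm_inf (L \<inter> VS B)) \<and>
         nuV B nrm norm_inf (L \<inter> VS B) =
           Sup {Min ((\<lambda>i. x $ i) ` B) | x. x \<in> L \<and> nonneg x \<and> nrm x = 1}) \<and>
      (- B \<noteq> {} \<longrightarrow>
         sigmaV (- B) nrm norm_inf (orthogonal_comp L \<inter> VS (- B))
           = ereal (nuV (- B) nrm norm_inf (orthogonal_comp L \<inter> VS (- B))) \<and>
         nuV (- B) nrm norm_inf (orthogonal_comp L \<inter> VS (- B)) =
           Sup {Min ((\<lambda>i. x $ i) ` (- B)) | x. x \<in> orthogonal_comp L \<and> nonneg x \<and> nrm x = 1}))
   \<and>
   (B \<noteq> {} \<longrightarrow>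
      sigmaV B norm_one norm_inf (L \<inter> VS B) = ereal (nuV B norm_one norm_inf (L \<inter> VS B)) \<and>
      nuV B norm_one norm_inf (L \<inter> VS B) =
        Sup {Min ((\<lambda>i. x $ i) ` B) | x. x \<in> L \<inter> std_simplex}) \<and>
   (- B \<noteq> {} \<longrightarrow>
      sigmaV (- B) norm_one norm_inf (orthogonal_comp L \<inter> VS (- B))
        = ereal (nuV (- B) norm_one norm_inf (orthogonal_comp L \<inter> VS (- B))) \<and>
      nuV (- B) norm_one norm_inf (orthogonal_comp L \<inter> VS (- B)) =
        Sup {Min ((\<lambda>i. x $ i) ` (- B)) | x. x \<in> orthogonal_comp L \<inter> std_simplex})
   \<and>
   (\<forall>nrm :: real^'n \<Rightarrow> real. is_norm nrm \<longrightarrow>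
      (B \<noteq> {} \<longrightarrow>
         sigmaV B nrm norm_one (L \<inter> VS B) = ereal (nuV B nrm norm_one (L \<inter> VS B)) \<and>
         nuV B nrm norm_one (L \<inter> VS B) =
           Inf ((\<lambda>i. Sup {x $ i | x. x \<in> L \<and> nonneg x \<and> nrm x = 1}) ` B)) \<and>
      (- B \<noteq> {} \<longrightarrow>
         sigmaV (- B) nrm norm_one (orthogonal_comp L \<inter> VS (- B))
           = ereal (nuV (- B) nrm norm_one (orthogonal_comp L \<inter> VS (- B))) \<and>
         nuV (- B) nrm norm_one (orthogonal_comp L \<inter> VS (- B)) =
           Inf ((\<lambda>i. Sup {x $ i | x. x \<in> orthogonal_comp L \<and> nonneg x \<and> nrm x = 1}) ` (- B))))
   \<and>
   (B \<noteq> {} \<longrightarrow>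
      sigmaV B norm_one norm_one (L \<inter> VS B) = ereal (nuV B norm_one norm_one (L \<inter> VS B)) \<and>
      nuV B norm_one norm_one (L \<inter> VS B) =
        Inf ((\<lambda>i. Sup {x $ i | x. x \<in> L \<inter> std_simplex}) ` B)) \<and>
   (- B \<noteq> {} \<longrightarrow>
      sigmaV (- B) norm_one norm_one (orthogonal_comp L \<inter> VS (- B))
        = ereal (nuV (- B) norm_one norm_one (orthogonal_comp L \<inter> VS (- B))) \<and>
      nuV (- B) norm_one norm_one (orthogonal_comp L \<inter> VS (- B)) =
        Inf ((\<lambda>i. Sup {x $ i | x. x \<in> orthogonal_comp L \<inter> std_simplex}) ` (- B)))
   \<and>
   (B \<noteq> {} \<longrightarrow>
      sigmaV B norm norm (L \<inter> VS B) = ereal (nuV B norm norm (L \<inter> VS B)) \<and>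
      nuV B norm norm (L \<inter> VS B) =
        Inf {Sup {u \<bullet> x | x. x \<in> L \<and> nonneg x \<and> norm x = 1} | u. u \<in> KS B \<and> norm u = 1}) \<and>
   (- B \<noteq> {} \<longrightarrow>
      sigmaV (- B) norm norm (orthogonal_comp L \<inter> VS (- B))
        = ereal (nuV (- B) norm norm (orthogonal_comp L \<inter> VS (- B))) \<and>
      nuV (- B) norm norm (orthogonal_comp L \<inter> VS (- B)) =
        Inf {Sup {u \<bullet> x | x. x \<in> orthogonal_comp L \<and> nonneg x \<and> norm x = 1} | u.
               u \<in> KS (- B) \<and> norm u = 1})"
proof -
  have "subspace L" using assms(1) by (simp add: Gr_def)
  obtain p where p: "p \<in> L" "\<forall>i\<in>B. 0 < p $ i" "\<forall>i. i \<notin> B \<longrightarrow> p $ i = 0"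
    using assms(4) unfolding GT_partition_def by blast
  obtain q where q: "q \<in> orthogonal_comp L" "\<forall>i\<in>B. q $ i = 0" "\<forall>i. i \<notin> B \<longrightarrow> 0 < q $ i"
    using assms(4) unfolding GT_partition_def by blast
  have "nonneg p" "nonneg q"
    using p(2,3) q(2,3) by (metis less_eq_real_def nonneg_def order_refl)+
  have "x \<in> VS B" if "x \<in> L" "nonneg x" for x
    using q that \<open>nonneg q\<close>
    by (intro nonneg_orthogonal_imp_VS[of x q]) (auto simp: orthogonal_comp_def orthogonal_def inner_commute)
  note B_block = GT_block_values[OF _ \<open>subspace L\<close> p this]
  have q_N: "\<forall>i\<in>- B. 0 < q $ i" "\<forall>i. i \<notin> - B \<longrightarrow> q $ i = 0" using q by auto
  have "x \<in> VS (- B)" if "x \<in> orthogonal_comp L" "nonneg x" for x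
    using p that \<open>nonneg p\<close>
    by (intro nonneg_orthogonal_imp_VS[of x p]) (auto simp: orthogonal_comp_def orthogonal_def inner_commute)
  note N_block = GT_block_values[OF _ subspace_orthogonal_comp q(1) q_N this]
  show ?thesis using B_block N_block by blast
qed

end
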